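(* Let $k,r\in\mathbb{N}$ and let $G$ be a countably infinite, one-way $k$-locally finite graph. (i) If $k=2$, then $\mathrm{Rd}_r(G)\geq 1/r$ (for every $r\ge 1$). (ii) If $k\geq 2$, then $\mathrm{Rd}_2(G)\geq \frac{1}{2(k-1)}$. (iii) If $r\geq 3$ and $k\geq 3$, then $\mathrm{Rd}_r(G)\geq \frac{1}{\sum_{i=0}^{(k-2)r+1}(r-1)^i}\geq \frac{1}{r^{(k-2)r+1}}$.
   Context: $K_{\mathbb{N}}$ is the complete graph on vertex set $\mathbb{N}=\{1,2,\dots\}$. An $r$-coloring is a map from the edges of $K_\mathbb{N}$ to $[r]=\{1,\dots,r\}$. A copy of a graph $G$ in $K_\mathbb{N}$ is a subgraph of $K_\mathbb{N}$ isomorphic to $G$; it is monochromatic if all its edges receive the same color. For $V\subseteq\mathbb{N}$ the upper density is $\overline{d}(V)=\limsup_{t\to\infty}|V\cap\{1,\dots,t\}|/t$, and the upper density of a copy is the upper density of its vertex set. For an $r$-coloring $\varphi$, $\mathrm{Rd}_\varphi(G)$ is the supremum of upper densities of monochromatic copies of $G$ in $\varphi$ (0 if none), and $\mathrm{Rd}_r(G)$ is the infimum of $\mathrm{Rd}_\varphi(G)$ over all $r$-colorings $\varphi$; $\mathrm{Rd}(G)=\mathrm{Rd}_2(G)$. A graph $G$ is one-way $k$-locally finite ($k\ge2$) if there is a partition of $V(G)$ into $k$ independent sets $V_1,\dots,V_k$ with $|V_1|\geq\dots\geq|V_k|$ such that for all $1\le i<j\le k$ and all $v\in V_j$, $v$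 has only finitely many neighbors in $V_i$. *)

theory Defs
  imports "HOL-Library.Extended_Real" "HOL-Library.Liminf_Limsup"
begin

definition upper_density :: "nat set \<Rightarrow> ereal" where
  "upper_density S = limsup (\<lambda>t. ereal (real (card (S \<inter> {1..t})) / real t))"

text \<open>An r-colouring of the edges of the complete graph on {1,2,...};
  edges are represented as two-element sets of positive integers.\<close>
definition r_coloring :: "nat \<Rightarrow> (nat set \<Rightarrow> nat) \<Rightarrow> bool" where
  "r_coloring r col \<longleftrightarrow>
     (\<forall>x y. 1 \<le> x \<longrightarrow> 1 \<le> y \<longrightarrow> x \<noteq> y \<longrightarrow> col {x, y} \<in> {1..r})"

definition simple_graph :: "'a set \<Rightarrow> ('a \<Rightarrow> 'a \<Rightarrow> bool) \<Rightarrow> bool" where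
  "simple_graph V E \<longleftrightarrow>
     (\<forall>u v. E u v \<longrightarrow> u \<in> V \<and> v \<in> V \<and> u \<noteq> v \<and> E v u)"

definition mono_copies :: "(nat set \<Rightarrow> nat) \<Rightarrow> 'a set \<Rightarrow> ('a \<Rightarrow> 'a \<Rightarrow> bool) \<Rightarrow> nat set set" where
  "mono_copies col V E =
     {f ` V | f. inj_on f V \<and> f ` V \<subseteq> {1..} \<and>
                (\<exists>c. \<forall>u v. E u v \<longrightarrow> col {f u, f v} = c)}"

definition Rd_col :: "(nat set \<Rightarrow> nat) \<Rightarrow> 'a set \<Rightarrow> ('a \<Rightarrow> 'a \<Rightarrow> bool) \<Rightarrow> ereal" where
  "Rd_col col V E = Sup ({0} \<union> upper_density ` mono_copies col V E)"

definition Rd :: "nat \<Rightarrow> 'a set \<Rightarrow> ('a \<Rightarrow> 'a \<Rightarrow> bool) \<Rightarrow> ereal" where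
  "Rd r V E = Inf ((\<lambda>col. Rd_col col V E) ` {col. r_coloring r col})"

text \<open>One-way k-locally finite: partition into k independent sets P 1, ..., P k
  with |P 1| \<ge> ... \<ge> |P k| (cardinality comparison via injections) such that each
  vertex of P j has finitely many neighbours in P i whenever i < j.\<close>
definition one_way_locally_finite :: "nat \<Rightarrow> 'a set \<Rightarrow> ('a \<Rightarrow> 'a \<Rightarrow> bool) \<Rightarrow> bool" where
  "one_way_locally_finite k V E \<longleftrightarrow> 2 \<le> k \<and>
     (\<exists>P :: nat \<Rightarrow> 'a set.
        (\<Union>i\<in>{1..k}. P i) = V \<and>
        (\<forall>i\<in>{1..k}. \<forall>j\<in>{1..k}. i \<noteq> j \<longrightarrow> P i \<inter> P j = {}) \<and>
        (\<forall>i\<in>{1..k}. \<forall>u\<in>P i. \<forall>v\<in>P i. \<not> E u v) \<and>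
        (\<forall>i\<in>{1..k}. \<forall>j\<in>{1..k}. i < j \<longrightarrow> (\<exists>g. inj_on g (P j) \<and> g ` P j \<subseteq> P i)) \<and>
        (\<forall>i\<in>{1..k}. \<forall>j\<in>{1..k}. i < j \<longrightarrow> (\<forall>v\<in>P j. finite {u \<in> P i. E u v})))"

end

theory Submission
  imports Defs "HOL-Analysis.Extended_Real_Limits"
begin

text \<open>
  Fix an r-colouring and let \<rho> be the largest upper density of a monochromatic copy of G.
  For a free ultrafilter W on the positive integers, large_nbhd col W c is the set of x whose
  c-neighbourhood is W-large. A tower in colour c is a list of free ultrafilters W_0, W_1, ...
  with W_i-large sets Y_i and a base X such that X \<subseteq> Y_0 \<subseteq> Y_1 \<subseteq> ..., where X lies in
  large_nbhd col W_0 c and Y_i in large_nbhd col W_(i+1) c.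

  Split G into levels 1, ..., k so that every vertex has finitely many neighbours on lower
  levels, and embed G greedily along an order in which these neighbours come first: level 1
  fills all of X and level j goes into Y_(j-2), because the finitely many neighbours embedded
  before a vertex lie in lower sets, so their common c-neighbourhood is W_(j-2)-large. Hence
  the base of a tower of length k-1 has upper density at most \<rho>.

  Starting from all positive integers and empty towers, choose a free ultrafilter W containing
  the current set Z and split Z along the sets large_nbhd col W c. One class is W-large and is
  the base of a constant tower; every other class extends the tower of its colour by (W, Z),
  which either completes that tower or lowers the total deficit, the sum over all colours of
  k-2 minus the tower length. Induction on the deficit, which starts at (k-2)r, gives
  1 \<le> (1 + (r-1) + ... + (r-1)^((k-2)r+1)) \<rho>.
\<close>

lemma upper_density_mono: "A \<subseteq> B \<Longrightarrow> upper_density A \<le> upper_density B"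
  unfolding upper_density_def
  by (intro Limsup_mono always_eventually allI) (auto intro!: divide_right_mono card_mono)

lemma upper_density_Un_le: "upper_density (A \<union> B) \<le> upper_density A + upper_density B"
proof -
  let ?f = "\<lambda>S t. ereal (real (card (S \<inter> {1..t})) / real t)"
  have "limsup (?f (A \<union> B)) \<le> limsup (\<lambda>t. ?f A t + ?f B t)"
  proof (intro Limsup_mono always_eventually allI)
    fix t :: nat
    have "card ((A \<union> B) \<inter> {1..t}) \<le> card (A \<inter> {1..t}) + card (B \<inter> {1..t})"
      by (metis Int_Un_distrib2 card_Un_le)
    then show "?f (A \<union> B) t \<le> ?f A t + ?f B t"
      by (simp add: add_divide_distrib[symmetric] divide_right_mono)
  qed
  also have "\<dots> \<le> limsup (?f A) + limsup (?f B)"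
    by (rule ereal_limsup_add_mono)
  finally show ?thesis
    unfolding upper_density_def .
qed

lemma upper_density_finite: "finite A \<Longrightarrow> upper_density A \<le> 0"
proof -
  assume "finite A"
  have "upper_density A \<le> limsup (\<lambda>t. ereal (real (card A) / real t))"
    unfolding upper_density_def using \<open>finite A\<close>
    by (intro Limsup_mono always_eventually allI) (simp add: card_mono divide_right_mono)
  also have "\<dots> = 0"
    using lim_imp_Limsup[OF _ tendsto_ereal[OF lim_const_over_n]] by (simp add: zero_ereal_def)
  finally show ?thesis .
qed

lemma upper_density_UN_le:
  "finite C \<Longrightarrow> upper_density (\<Union>c\<in>C. A c) \<le> (\<Sum>c\<in>C. upper_density (A c))"
proof (induction C rule: finite_induct)
  case empty
  then show ?case using upper_density_finite[of "{}"] by simp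
next
  case (insert x C)
  have "upper_density (\<Union>c\<in>insert x C. A c) \<le> upper_density (A x) + upper_density (\<Union>c\<in>C. A c)"
    using upper_density_Un_le by simp
  also have "\<dots> \<le> upper_density (A x) + (\<Sum>c\<in>C. upper_density (A c))"
    using insert.IH by (rule add_left_mono)
  finally show ?case
    using insert.hyps by simp
qed

lemma upper_density_le_1: "upper_density A \<le> 1"
  unfolding upper_density_def
proof (intro Limsup_bounded always_eventually allI)
  fix t :: nat
  have "card (A \<inter> {1..t}) \<le> t"
    using card_mono[of "{1..t}" "A \<inter> {1..t}"] by auto
  then show "ereal (real (card (A \<inter> {1..t})) / real t) \<le> 1"
    by (cases "t = 0") (auto simp: divide_le_eq_1)
qed

lemma upper_density_positive_integers: "1 \<le> upper_density {1::nat..}"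
proof -
  have "eventually (\<lambda>t. 1 \<le> ereal (real (card ({1..} \<inter> {1..t})) / real t)) sequentially"
    using eventually_ge_at_top[of "1::nat"] by eventually_elim auto
  then have "limsup (\<lambda>t::nat. 1 :: ereal) \<le> upper_density {1..}"
    unfolding upper_density_def by (rule Limsup_mono)
  then show ?thesis
    by (simp add: Limsup_const)
qed

definition free_ultrafilter :: "'a filter \<Rightarrow> bool" where
  "free_ultrafilter F \<longleftrightarrow>
     F \<noteq> bot \<and> F \<le> cofinite \<and> (\<forall>P. eventually P F \<or> eventually (\<lambda>x. \<not> P x) F)"

lemma maximal_filter_below:
  fixes F :: "'a filter"
  assumes "F \<noteq> bot"
  obtains U where "U \<noteq> bot" "U \<le> F" "\<forall>G. G \<noteq> bot \<longrightarrow> G \<le> U \<longrightarrow> G = U"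
proof -
  let ?A = "{G. G \<noteq> bot \<and> G \<le> F}"
  have "\<exists>U\<in>?A. \<forall>G\<in>?A. G \<le> U \<longrightarrow> G = U"
  proof (rule predicate_Zorn)
    show "partial_order_on ?A (relation_of (\<lambda>U G. G \<le> U) ?A)"
      by (auto simp: partial_order_on_def preorder_on_def refl_on_def trans_def antisym_def
          relation_of_def)
    fix C assume C: "C \<in> Chains (relation_of (\<lambda>U G. G \<le> U) ?A)"
    then have C_sub: "C \<subseteq> ?A" and C_chain: "\<And>G H. G \<in> C \<Longrightarrow> H \<in> C \<Longrightarrow> G \<le> H \<or> H \<le> G"
      by (auto simp: Chains_def relation_of_def)
    show "\<exists>U\<in>?A. \<forall>G\<in>C. U \<le> G"
    proof (cases "C = {}")
      case True
      then show ?thesis using assms by auto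
    next
      case False
      \<comment> \<open>the infimum of a chain of proper filters is proper, since the chain is directed\<close>
      have "Inf C \<noteq> bot"
        unfolding trivial_limit_def
      proof (subst eventually_Inf_base)
        show "\<exists>H\<in>C. H \<le> inf G G'" if "G \<in> C" "G' \<in> C" for G G'
          using C_chain[OF that] that by (elim disjE) (auto simp: inf_absorb1 inf_absorb2)
        show "\<not> (\<exists>G\<in>C. eventually (\<lambda>x. False) G)"
          using C_sub by (auto simp: trivial_limit_def)
      qed (fact False)
      then show ?thesis
        using C_sub False by (auto intro: Inf_lower Inf_lower2)
    qed
  qed
  then obtain U where U: "U \<noteq> bot" "U \<le> F" and max: "\<And>G. G \<in> ?A \<Longrightarrow> G \<le> U \<Longrightarrow> G = U"
    by auto
  show ?thesis
  proof (rule that[OF U], intro allI impI)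
    fix G assume G: "G \<noteq> bot" "G \<le> U"
    have "G \<le> F"
      using G(2) U(2) by (rule order.trans)
    with G show "G = U"
      by (intro max) simp_all
  qed
qed

lemma free_ultrafilter_exists:
  assumes "infinite A"
  obtains F :: "'a filter" where "free_ultrafilter F" "\<forall>\<^sub>F x in F. x \<in> A"
proof -
  have "inf cofinite (principal A) \<noteq> bot"
    unfolding trivial_limit_def eventually_inf_principal eventually_cofinite using assms by simp
  then obtain U where U: "U \<noteq> bot" "U \<le> inf cofinite (principal A)"
    and maximal: "\<forall>G. G \<noteq> bot \<longrightarrow> G \<le> U \<longrightarrow> G = U"
    by (rule maximal_filter_below)
  have "eventually P U \<or> eventually (\<lambda>x. \<not> P x) U" for P
  proof (rule disjCI)
    assume "\<not> eventually (\<lambda>x. \<not> P x) U"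
    then have "inf U (principal {x. P x}) \<noteq> bot"
      by (simp add: trivial_limit_def eventually_inf_principal)
    then have "inf U (principal {x. P x}) = U"
      using maximal inf_le1 by blast
    moreover have "eventually P (inf U (principal {x. P x}))"
      by (simp add: eventually_inf_principal)
    ultimately show "eventually P U"
      by simp
  qed
  moreover have "\<forall>\<^sub>F x in U. x \<in> A"
    using U(2) by (auto intro: filter_leD simp: eventually_principal)
  ultimately show ?thesis
    using that U by (auto simp: free_ultrafilter_def)
qed

lemma free_ultrafilter_avoids_finite:
  "free_ultrafilter F \<Longrightarrow> finite A \<Longrightarrow> \<forall>\<^sub>F x in F. x \<notin> A"
  unfolding free_ultrafilter_def by (auto intro: filter_leD simp: eventually_cofinite)

lemma free_ultrafilter_bex:
  assumes F: "free_ultrafilter F" and "finite C" and "\<forall>\<^sub>F x in F. \<exists>c\<in>C. P c x"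
  shows "\<exists>c\<in>C. \<forall>\<^sub>F x in F. P c x"
proof (rule ccontr)
  assume "\<not> ?thesis"
  then have "\<forall>c\<in>C. \<forall>\<^sub>F x in F. \<not> P c x"
    using F by (auto simp: free_ultrafilter_def)
  then have "\<forall>\<^sub>F x in F. \<forall>c\<in>C. \<not> P c x"
    using \<open>finite C\<close> by (simp add: eventually_ball_finite_distrib)
  with assms(3) have "\<forall>\<^sub>F x in F. False"
    by eventually_elim blast
  with F show False
    by (simp add: free_ultrafilter_def trivial_limit_def)
qed

definition large_nbhd :: "(nat set \<Rightarrow> nat) \<Rightarrow> nat filter \<Rightarrow> nat \<Rightarrow> nat set" where
  "large_nbhd col W c = {x. 1 \<le> x \<and> (\<forall>\<^sub>F y in W. col {x, y} = c)}"

lemma large_nbhd_cover: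
  assumes col: "r_coloring r col" and W: "free_ultrafilter W"
  shows "{1..} \<subseteq> (\<Union>c\<in>{1..r}. large_nbhd col W c)"
proof
  fix x :: nat assume "x \<in> {1..}"
  have "\<forall>\<^sub>F y in W. y \<notin> {0, x}"
    using W by (rule free_ultrafilter_avoids_finite) simp
  then have "\<forall>\<^sub>F y in W. \<exists>c\<in>{1..r}. col {x, y} = c"
    by eventually_elim (use col \<open>x \<in> {1..}\<close> in \<open>auto simp: r_coloring_def\<close>)
  from free_ultrafilter_bex[OF W finite_atLeastAtMost this]
  obtain c where "c \<in> {1..r}" "\<forall>\<^sub>F y in W. col {x, y} = c"
    by blast
  with \<open>x \<in> {1..}\<close> show "x \<in> (\<Union>c\<in>{1..r}. large_nbhd col W c)"
    by (auto simp: large_nbhd_def)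
qed

fun tower :: "(nat set \<Rightarrow> nat) \<Rightarrow> nat \<Rightarrow> (nat filter \<times> nat set) list \<Rightarrow> nat set \<Rightarrow> bool" where
  "tower col c [] X \<longleftrightarrow> X \<subseteq> {1..}"
| "tower col c ((W, Y) # T) X \<longleftrightarrow>
     free_ultrafilter W \<and> (\<forall>\<^sub>F y in W. y \<in> Y) \<and> X \<subseteq> Y \<inter> large_nbhd col W c \<and> tower col c T Y"

lemma tower_positive: "tower col c T X \<Longrightarrow> X \<subseteq> {1..}"
  by (induction col c T X rule: tower.induct) (auto simp: large_nbhd_def)

lemma tower_mono: "tower col c T X \<Longrightarrow> X' \<subseteq> X \<Longrightarrow> tower col c T X'"
  by (induction col c T X rule: tower.induct) (auto dest: subsetD)

lemma tower_replicate:
  assumes "free_ultrafilter W" "\<forall>\<^sub>F y in W. y \<in> Y" "Y \<subseteq> large_nbhd col W c"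
  shows "tower col c (replicate n (W, Y)) Y"
  using assms by (induction n) (auto simp: large_nbhd_def)

lemma tower_nth:
  assumes "tower col c T X" "l < length T"
  shows "free_ultrafilter (fst (T ! l)) \<and> (\<forall>\<^sub>F y in fst (T ! l). y \<in> snd (T ! l))
    \<and> snd (T ! l) \<subseteq> {1..}"
  using assms
proof (induction T arbitrary: X l)
  case (Cons p T)
  obtain W Y where p: "p = (W, Y)"
    by fastforce
  with Cons show ?case
    using tower_positive[of col c T Y] by (cases l) auto
qed simp

lemma tower_below_large_nbhd:
  assumes "tower col c T X" "l < length T"
  shows "X \<union> (\<Union>i<l. snd (T ! i)) \<subseteq> large_nbhd col (fst (T ! l)) c"
  using assms
proof (induction T arbitrary: X l)
  case Nil
  then show ?case by simp
next
  case (Cons p T)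
  obtain W Y where p: "p = (W, Y)"
    by fastforce
  show ?case
  proof (cases l)
    case 0
    then show ?thesis
      using Cons.prems by (auto simp: p)
  next
    case (Suc l')
    then have "Y \<union> (\<Union>i<l'. snd (T ! i)) \<subseteq> large_nbhd col (fst (T ! l')) c"
      using Cons.IH[of Y l'] Cons.prems by (auto simp: p)
    then show ?thesis
      using Cons.prems(1) Suc by (auto simp: p lessThan_Suc_eq_insert_0)
  qed
qed

lemma simple_graph_edgeD:
  "simple_graph V E \<Longrightarrow> E u v \<Longrightarrow> u \<in> V \<and> v \<in> V \<and> u \<noteq> v \<and> E v u"
  unfolding simple_graph_def by blast

definition part_index :: "nat \<Rightarrow> (nat \<Rightarrow> 'a set) \<Rightarrow> 'a \<Rightarrow> nat" where
  "part_index k P v = (SOME i. i \<in> {1..k} \<and> v \<in> P i)"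

lemma part_index: "v \<in> (\<Union>i\<in>{1..k}. P i) \<Longrightarrow> part_index k P v \<in> {1..k} \<and> v \<in> P (part_index k P v)"
  unfolding part_index_def by (rule someI_ex) blast

lemma part_index_eq:
  assumes "\<forall>i\<in>{1..k}. \<forall>j\<in>{1..k}. i \<noteq> j \<longrightarrow> P i \<inter> P j = {}" "i \<in> {1..k}" "v \<in> P i"
  shows "part_index k P v = i"
proof (rule ccontr)
  assume "part_index k P v \<noteq> i"
  moreover have "part_index k P v \<in> {1..k}" "v \<in> P (part_index k P v)"
    using part_index[where v = v and k = k and P = P] assms(2,3) by blast+
  ultimately have "P (part_index k P v) \<inter> P i = {}"
    using assms(1,2) by blast
  with \<open>v \<in> P (part_index k P v)\<close> assms(3) show False
    by blast
qed

lemma part_index_edge: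
  assumes "\<forall>i\<in>{1..k}. \<forall>u\<in>P i. \<forall>v\<in>P i. \<not> E u v"
    and "u \<in> (\<Union>i\<in>{1..k}. P i)" "v \<in> (\<Union>i\<in>{1..k}. P i)" "E u v"
  shows "part_index k P u \<noteq> part_index k P v"
proof
  assume "part_index k P u = part_index k P v"
  then have "u \<in> P (part_index k P v)" "v \<in> P (part_index k P v)" "part_index k P v \<in> {1..k}"
    using part_index[OF assms(2)] part_index[OF assms(3)] by auto
  with assms(1,4) show False
    by blast
qed

lemma finite_lower_part_neighbours:
  fixes k :: nat
  assumes "\<forall>i\<in>{1..k}. \<forall>j\<in>{1..k}. i < j \<longrightarrow> (\<forall>v\<in>P j. finite {u \<in> P i. E u v})"
    and "j \<in> {1..k}" "v \<in> P j"
  shows "finite (\<Union>i\<in>{1..<j}. {u \<in> P i. E u v})"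
proof (intro finite_UN_I)
  fix i assume "i \<in> {1..<j}"
  with assms(2) have "i \<in> {1..k}" "i < j"
    by auto
  with assms show "finite {u \<in> P i. E u v}"
    by blast
qed simp

lemma infinite_first_part:
  fixes k :: nat
  assumes "infinite (\<Union>i\<in>{1..k}. P i)" and "\<And>j. j \<in> {2..k} \<Longrightarrow> \<exists>g. inj_on g (P j) \<and> g ` P j \<subseteq> P 1"
  shows "infinite (P 1)"
proof
  assume "finite (P 1)"
  have "finite (P j)" if "j \<in> {1..k}" for j
  proof (cases "j = 1")
    case False
    with that have "j \<in> {2..k}"
      by auto
    then obtain g where "inj_on g (P j)" "g ` P j \<subseteq> P 1"
      using assms(2) by blast
    with \<open>finite (P 1)\<close> show ?thesis
      using finite_imageD finite_subset by blast
  qed (use \<open>finite (P 1)\<close> in simp)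
  then have "finite (\<Union>i\<in>{1..k}. P i)"
    by (intro finite_UN_I) simp_all
  with assms(1) show False
    by contradiction
qed

lemma one_way_locally_finite_levels:
  assumes owlf: "one_way_locally_finite k V E" and G: "simple_graph V E" and "infinite V"
  obtains lev :: "'a \<Rightarrow> nat" where "\<And>v. v \<in> V \<Longrightarrow> lev v \<in> {1..k}"
    "\<And>u v. E u v \<Longrightarrow> lev u \<noteq> lev v" "infinite {v \<in> V. lev v = 1}"
    "\<And>v. v \<in> V \<Longrightarrow> finite {u. E u v \<and> lev u < lev v}"
proof -
  obtain P where cover: "(\<Union>i\<in>{1..k}. P i) = V"
    and disjoint: "\<forall>i\<in>{1..k}. \<forall>j\<in>{1..k}. i \<noteq> j \<longrightarrow> P i \<inter> P j = {}"
    and independent: "\<forall>i\<in>{1..k}. \<forall>u\<in>P i. \<forall>v\<in>P i. \<not> E u v"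
    and smaller: "\<forall>i\<in>{1..k}. \<forall>j\<in>{1..k}. i < j \<longrightarrow> (\<exists>g. inj_on g (P j) \<and> g ` P j \<subseteq> P i)"
    and finite_below: "\<forall>i\<in>{1..k}. \<forall>j\<in>{1..k}. i < j \<longrightarrow> (\<forall>v\<in>P j. finite {u \<in> P i. E u v})"
    and "2 \<le> k"
    using owlf unfolding one_way_locally_finite_def by (elim conjE exE) (rule that)
  define lev where "lev = part_index k P"
  have lev: "lev v \<in> {1..k} \<and> v \<in> P (lev v)" if "v \<in> V" for v
    unfolding lev_def using that cover by (intro part_index) blast
  show ?thesis
  proof
    show "lev u \<noteq> lev v" if "E u v" for u v
      unfolding lev_def
      by (rule part_index_edge[OF independent]) (use cover simple_graph_edgeD[OF G that] that in auto)
    show "finite {u. E u v \<and> lev u < lev v}" if "v \<in> V" for v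
    proof (rule finite_subset)
      show "{u. E u v \<and> lev u < lev v} \<subseteq> (\<Union>i\<in>{1..<lev v}. {u \<in> P i. E u v})"
      proof
        fix u assume u: "u \<in> {u. E u v \<and> lev u < lev v}"
        then have "u \<in> V"
          using simple_graph_edgeD[OF G] by blast
        with u lev[of u] show "u \<in> (\<Union>i\<in>{1..<lev v}. {u \<in> P i. E u v})"
          by auto
      qed
      show "finite (\<Union>i\<in>{1..<lev v}. {u \<in> P i. E u v})"
        using finite_below lev[OF that] by (intro finite_lower_part_neighbours) auto
    qed
    have "infinite (P 1)"
    proof (rule infinite_first_part)
      show "infinite (\<Union>i\<in>{1..k}. P i)"
        using cover \<open>infinite V\<close> by simp
      show "\<exists>g. inj_on g (P j) \<and> g ` P j \<subseteq> P 1" if "j \<in> {2..k}" for j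
      proof -
        have "1 \<in> {1..k}" "j \<in> {1..k}" "1 < j"
          using that by auto
        then show ?thesis
          using smaller by blast
      qed
    qed
    moreover have "P 1 \<subseteq> {v \<in> V. lev v = 1}"
    proof
      fix v assume "v \<in> P 1"
      moreover have "1 \<in> {1..k}"
        using \<open>2 \<le> k\<close> by simp
      ultimately show "v \<in> {v \<in> V. lev v = 1}"
        using cover part_index_eq[OF disjoint] by (auto simp: lev_def)
    qed
    ultimately show "infinite {v \<in> V. lev v = 1}"
      using finite_subset by blast
  qed (use lev in blast)
qed

primrec depth_weight :: "('a \<Rightarrow> nat) \<Rightarrow> ('a \<Rightarrow> 'a set) \<Rightarrow> nat \<Rightarrow> 'a \<Rightarrow> nat" where
  "depth_weight w L 0 v = w v"
| "depth_weight w L (Suc n) v = w v + (\<Sum>u\<in>L v. Suc (depth_weight w L n u))"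

lemma depth_weight_Suc_mono: "depth_weight w L n v \<le> depth_weight w L (Suc n) v"
proof (induction n arbitrary: v)
  case (Suc n)
  have "(\<Sum>u\<in>L v. Suc (depth_weight w L n u)) \<le> (\<Sum>u\<in>L v. Suc (depth_weight w L (Suc n) u))"
    using Suc.IH by (intro sum_mono) simp
  then show ?case
    unfolding depth_weight.simps(2)[of w L n v] depth_weight.simps(2)[of w L "Suc n" v]
    by (rule add_left_mono)
qed simp

lemma depth_weight_mono:
  assumes "n \<le> m"
  shows "depth_weight w L n v \<le> depth_weight w L m v"
  using lift_Suc_mono_le[of "\<lambda>n. depth_weight w L n v", OF depth_weight_Suc_mono assms] .

lemma weight_le_depth_weight: "w v \<le> depth_weight w L n v"
  by (cases n) simp_all

lemma depth_weight_less:
  assumes "finite (L v)" "u \<in> L v" "n < m"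
  shows "depth_weight w L n u < depth_weight w L m v"
proof -
  obtain m' where m': "m = Suc m'" "n \<le> m'"
    using assms(3) by (cases m) auto
  have "depth_weight w L n u \<le> depth_weight w L m' u"
    using m'(2) by (rule depth_weight_mono)
  also have "\<dots> < (\<Sum>u'\<in>L v. Suc (depth_weight w L m' u'))"
    using member_le_sum[of u "L v" "\<lambda>u'. Suc (depth_weight w L m' u')"] assms(1,2) by simp
  also have "\<dots> \<le> depth_weight w L m v"
    by (simp add: m'(1))
  finally show ?thesis .
qed

lemma square_key_less:
  fixes a b i j :: nat
  assumes "i \<le> a" "a < b"
  shows "a * a + a + i < b * b + b + j"
proof -
  have "a * a + a + i < Suc a * Suc a + Suc a"
    using assms(1) by simp
  also have "\<dots> \<le> b * b + b"
    using assms(2) by (intro add_mono mult_le_mono) simp_all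
  finally show ?thesis
    by simp
qed

lemma ranking_along_relation:
  fixes lev :: "'a \<Rightarrow> nat"
  assumes "countable V" and finite_below: "\<And>v. v \<in> V \<Longrightarrow> finite {u. R u v}"
    and lower: "\<And>u v. v \<in> V \<Longrightarrow> R u v \<Longrightarrow> u \<in> V \<and> lev u < lev v"
  obtains key :: "'a \<Rightarrow> nat" where "inj_on key V" "\<And>u v. v \<in> V \<Longrightarrow> R u v \<Longrightarrow> key u < key v"
proof -
  define idx where "idx = to_nat_on V"
  define rank where "rank v = depth_weight idx (\<lambda>v. {u. R u v}) (lev v) v" for v
  have rank_less: "rank u < rank v" if "v \<in> V" "R u v" for u v
    unfolding rank_def using finite_below lower that by (intro depth_weight_less) auto
  have idx_le_rank: "idx v \<le> rank v" for v
    unfolding rank_def by (rule weight_le_depth_weight)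
  define key where "key v = rank v * rank v + rank v + idx v" for v
  have key_less: "key u < key v" if "rank u < rank v" for u v
    unfolding key_def using idx_le_rank that by (rule square_key_less)
  show ?thesis
  proof
    show "inj_on key V"
    proof (rule inj_onI)
      fix u v assume "u \<in> V" "v \<in> V" "key u = key v"
      then have "rank u = rank v"
        using key_less[of u v] key_less[of v u] by linarith
      with \<open>key u = key v\<close> have "idx u = idx v"
        by (simp add: key_def)
      with \<open>u \<in> V\<close> \<open>v \<in> V\<close> show "u = v"
        using inj_on_to_nat_on[OF \<open>countable V\<close>] by (auto simp: idx_def dest: inj_onD)
    qed
    show "key u < key v" if "v \<in> V" "R u v" for u v
      using key_less rank_less that by blast
  qed
qed

locale greedy_embedding =
  fixes V :: "'a set" and E :: "'a \<Rightarrow> 'a \<Rightarrow> bool" and lev :: "'a \<Rightarrow> nat" and k :: nat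
    and key :: "'a \<Rightarrow> nat" and col :: "nat set \<Rightarrow> nat" and c :: nat
    and T :: "(nat filter \<times> nat set) list" and X :: "nat set"
  assumes simple: "simple_graph V E"
    and lev_range: "\<And>v. v \<in> V \<Longrightarrow> lev v \<in> {1..k}"
    and lev_edge: "\<And>u v. E u v \<Longrightarrow> lev u \<noteq> lev v"
    and level_1_infinite: "infinite {v \<in> V. lev v = 1}"
    and key_inj: "inj_on key V"
    and key_lower: "\<And>u v. E u v \<Longrightarrow> lev u < lev v \<Longrightarrow> key u < key v"
    and tower: "tower col c T X"
    and long: "k - 1 \<le> length T"
    and X_infinite: "infinite X"
begin

definition layer :: "nat \<Rightarrow> nat set" where
  "layer j = (if j = 1 then X else snd (T ! (j - 2)))"

definition admissible :: "(nat \<Rightarrow> nat) \<Rightarrow> 'a \<Rightarrow> nat \<Rightarrow> bool" where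
  "admissible h v x \<longleftrightarrow> x \<in> layer (lev v) \<and> x \<notin> h ` {..<key v}
     \<and> (\<forall>u\<in>V. key u < key v \<longrightarrow> E u v \<longrightarrow> col {h (key u), x} = c)"

\<comment> \<open>Numbers outside key ` V get the junk value 0, which lies in no layer.\<close>
definition greedy_step :: "nat \<Rightarrow> (nat \<Rightarrow> nat) \<Rightarrow> nat" where
  "greedy_step n h = (if n \<in> key ` V then (LEAST x. admissible h (inv_into V key n) x) else 0)"

fun greedy :: "nat \<Rightarrow> nat" where
  "greedy n = greedy_step n (nth (map greedy [0..<n]))"

declare greedy.simps [simp del]

lemma admissible_cong:
  assumes "\<And>m. m < key v \<Longrightarrow> h m = h' m"
  shows "admissible h v = admissible h' v"
proof -
  have "h ` {..<key v} = h' ` {..<key v}"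
    using assms by (intro image_cong) simp_all
  with assms show ?thesis
    unfolding admissible_def by (auto intro!: ext)
qed

lemma greedy_eq: "greedy n = greedy_step n greedy"
proof -
  have "greedy_step n (nth (map greedy [0..<n])) = greedy_step n greedy"
  proof (cases "n \<in> key ` V")
    case True
    then obtain v where v: "v \<in> V" "n = key v"
      by blast
    have "admissible (nth (map greedy [0..<n])) v = admissible greedy v"
      by (rule admissible_cong) (simp add: v)
    with v key_inj show ?thesis
      by (simp add: greedy_step_def)
  qed (simp add: greedy_step_def)
  then show ?thesis
    by (subst greedy.simps)
qed

lemma earlier_neighbour_lower:
  assumes "E u v" "key u < key v"
  shows "lev u < lev v"
proof (rule ccontr)
  assume "\<not> lev u < lev v"
  with lev_edge[OF assms(1)] have "lev v < lev u"
    by simp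
  moreover have "E v u"
    using simple_graph_edgeD[OF simple assms(1)] by simp
  ultimately show False
    using key_lower assms(2) by fastforce
qed

lemma layer_below_large_nbhd:
  assumes "1 \<le> i" "i < j" "j \<le> k"
  shows "layer i \<subseteq> large_nbhd col (fst (T ! (j - 2))) c"
proof -
  have "j - 2 < length T"
    using assms long by linarith
  then have "X \<union> (\<Union>l<j - 2. snd (T ! l)) \<subseteq> large_nbhd col (fst (T ! (j - 2))) c"
    by (rule tower_below_large_nbhd[OF tower])
  moreover have "i = 1 \<or> i - 2 < j - 2"
    using assms by linarith
  ultimately show ?thesis
    unfolding layer_def by auto
qed

lemma layer_properties:
  assumes "2 \<le> j" "j \<le> k"
  shows "free_ultrafilter (fst (T ! (j - 2)))" "\<forall>\<^sub>F y in fst (T ! (j - 2)). y \<in> layer j"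
  using tower_nth[OF tower, of "j - 2"] assms long by (auto simp: layer_def)

lemma layer_positive:
  assumes "j \<in> {1..k}"
  shows "layer j \<subseteq> {1..}"
proof (cases "j = 1")
  case True
  then show ?thesis
    using tower_positive[OF tower] by (simp add: layer_def)
next
  case False
  then have "j - 2 < length T"
    using assms long by auto
  with False show ?thesis
    using tower_nth[OF tower] by (simp add: layer_def)
qed

lemma no_earlier_neighbour_at_level_1:
  assumes "lev v = 1" "E u v"
  shows "\<not> key u < key v"
  using earlier_neighbour_lower[OF assms(2)] lev_range simple_graph_edgeD[OF simple assms(2)] assms(1)
  by fastforce

lemma finite_keys_below: "finite {u \<in> V. key u < n}"
proof (rule finite_imageD)
  show "finite (key ` {u \<in> V. key u < n})"
    by (rule finite_subset[of _ "{..<n}"]) auto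
  show "inj_on key {u \<in> V. key u < n}"
    using key_inj by (rule inj_on_subset) auto
qed

lemma admissible_exists:
  assumes v: "v \<in> V" and earlier: "\<And>u. u \<in> V \<Longrightarrow> key u < key v \<Longrightarrow> h (key u) \<in> layer (lev u)"
  shows "\<exists>x. admissible h v x"
proof (cases "lev v = 1")
  case True
  have "infinite (X - h ` {..<key v})"
    using X_infinite by (rule Diff_infinite_finite[rotated]) simp
  then obtain x where "x \<in> X - h ` {..<key v}"
    using infinite_imp_nonempty by blast
  with True have "admissible h v x"
    using no_earlier_neighbour_at_level_1 by (auto simp: admissible_def layer_def)
  then show ?thesis ..
next
  case False
  define j where "j = lev v"
  define W where "W = fst (T ! (j - 2))"
  have j: "2 \<le> j" "j \<le> k"
    using lev_range[OF v] False by (auto simp: j_def)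
  define I where "I = {u \<in> V. key u < key v \<and> E u v}"
  have "\<forall>\<^sub>F y in W. col {h (key u), y} = c" if u: "u \<in> I" for u
  proof -
    have "h (key u) \<in> layer (lev u)" "1 \<le> lev u" "lev u < j"
      using u earlier lev_range earlier_neighbour_lower by (auto simp: I_def j_def)
    with j have "h (key u) \<in> large_nbhd col W c"
      using layer_below_large_nbhd W_def by blast
    then show ?thesis
      by (simp add: large_nbhd_def)
  qed
  moreover have "finite I"
    using finite_keys_below[of "key v"] by (rule finite_subset[rotated]) (auto simp: I_def)
  ultimately have "\<forall>\<^sub>F y in W. \<forall>u\<in>I. col {h (key u), y} = c"
    by (simp add: eventually_ball_finite_distrib)
  moreover have "\<forall>\<^sub>F y in W. y \<notin> h ` {..<key v}"
    using layer_properties[OF j] by (intro free_ultrafilter_avoids_finite) (simp_all add: W_def)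
  moreover have "\<forall>\<^sub>F y in W. y \<in> layer j"
    using layer_properties[OF j] by (simp add: W_def)
  ultimately have "\<forall>\<^sub>F y in W. admissible h v y"
    by eventually_elim (auto simp: admissible_def I_def j_def)
  moreover have "W \<noteq> bot"
    using layer_properties[OF j] by (simp add: W_def free_ultrafilter_def)
  ultimately show ?thesis
    using eventually_happens' by blast
qed

lemma greedy_key: "v \<in> V \<Longrightarrow> greedy (key v) = (LEAST x. admissible greedy v x)"
  using key_inj by (subst greedy_eq) (simp add: greedy_step_def)

lemma greedy_admissible: "v \<in> V \<Longrightarrow> admissible greedy v (greedy (key v))"
proof (induction "key v" arbitrary: v rule: less_induct)
  case less
  then have "\<exists>x. admissible greedy v x"
    by (intro admissible_exists) (auto simp: admissible_def)
  with less.prems show ?case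
    by (simp add: greedy_key LeastI_ex)
qed

lemma greedy_fresh:
  assumes "v \<in> V" "m < key v"
  shows "greedy m \<noteq> greedy (key v)"
proof
  assume "greedy m = greedy (key v)"
  with assms(2) have "greedy (key v) \<in> greedy ` {..<key v}"
    by (metis imageI lessThan_iff)
  with greedy_admissible[OF assms(1)] show False
    by (simp add: admissible_def)
qed

lemma greedy_inj: "inj_on (greedy \<circ> key) V"
proof (rule inj_onI)
  fix u v assume uv: "u \<in> V" "v \<in> V" "(greedy \<circ> key) u = (greedy \<circ> key) v"
  have "\<not> key u < key v" "\<not> key v < key u"
    using greedy_fresh uv by fastforce+
  then show "u = v"
    using key_inj uv(1,2) by (auto dest: inj_onD)
qed

lemma greedy_positive: "v \<in> V \<Longrightarrow> 1 \<le> greedy (key v)"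
  using greedy_admissible layer_positive lev_range by (fastforce simp: admissible_def)

lemma greedy_monochromatic:
  assumes "E u v"
  shows "col {greedy (key u), greedy (key v)} = c"
proof -
  have "u \<in> V" "v \<in> V" "u \<noteq> v" "E v u"
    using simple_graph_edgeD[OF simple assms] by simp_all
  then have "key u < key v \<or> key v < key u"
    using key_inj by (metis inj_on_contraD linorder_neqE_nat)
  then show ?thesis
    using greedy_admissible[OF \<open>u \<in> V\<close>] greedy_admissible[OF \<open>v \<in> V\<close>] assms \<open>E v u\<close>
      \<open>u \<in> V\<close> \<open>v \<in> V\<close>
    by (auto simp: admissible_def insert_commute)
qed

\<comment> \<open>Level-1 vertices take the least unused element of X, and there are infinitely many of them.\<close>
lemma greedy_covers_base: "X \<subseteq> (greedy \<circ> key) ` V"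
proof
  fix x assume "x \<in> X"
  show "x \<in> (greedy \<circ> key) ` V"
  proof (rule ccontr)
    assume missed: "x \<notin> (greedy \<circ> key) ` V"
    have "1 \<le> x"
      using tower_positive[OF tower] \<open>x \<in> X\<close> by auto
    have unused: "x \<notin> greedy ` {..<n}" for n
    proof
      assume "x \<in> greedy ` {..<n}"
      then obtain m where "x = greedy m"
        by blast
      moreover have "greedy m = 0" if "m \<notin> key ` V"
        using that by (subst greedy_eq) (simp add: greedy_step_def)
      ultimately show False
        using missed \<open>1 \<le> x\<close> by force
    qed
    have "greedy (key a) \<le> x" if "a \<in> V" "lev a = 1" for a
    proof -
      have "admissible greedy a x"
        using \<open>x \<in> X\<close> unused \<open>lev a = 1\<close> no_earlier_neighbour_at_level_1
        by (auto simp: admissible_def layer_def)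
      then show ?thesis
        using \<open>a \<in> V\<close> by (simp add: greedy_key Least_le)
    qed
    then have "(greedy \<circ> key) ` {v \<in> V. lev v = 1} \<subseteq> {..x}"
      by auto
    moreover have "inj_on (greedy \<circ> key) {v \<in> V. lev v = 1}"
      using greedy_inj by (rule inj_on_subset) blast
    ultimately have "finite {v \<in> V. lev v = 1}"
      using finite_imageD finite_subset by blast
    with level_1_infinite show False ..
  qed
qed

end

lemma Rd_col_nonneg: "0 \<le> Rd_col col V E"
  unfolding Rd_col_def by (rule Sup_upper) simp

lemma upper_density_tower_base_le_Rd_col:
  assumes G: "simple_graph V E" and "countable V" "infinite V" "one_way_locally_finite k V E"
    and "tower col c T X" "k - 1 \<le> length T"
  shows "upper_density X \<le> Rd_col col V E"
proof (cases "finite X")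
  case True
  then show ?thesis
    using upper_density_finite Rd_col_nonneg order_trans by blast
next
  case False
  obtain lev where lev: "\<And>v. v \<in> V \<Longrightarrow> lev v \<in> {1..k}" "\<And>u v. E u v \<Longrightarrow> lev u \<noteq> lev v"
    "infinite {v \<in> V. lev v = 1}" "\<And>v. v \<in> V \<Longrightarrow> finite {u. E u v \<and> lev u < lev v}"
    by (rule one_way_locally_finite_levels[OF assms(4) G assms(3)]) (rule that)
  obtain key :: "'a \<Rightarrow> nat" where key: "inj_on key V"
    "\<And>u v. v \<in> V \<Longrightarrow> E u v \<and> lev u < lev v \<Longrightarrow> key u < key v"
  proof (rule ranking_along_relation[where R = "\<lambda>u v. E u v \<and> lev u < lev v"])
    show "u \<in> V \<and> lev u < lev v" if "v \<in> V" "E u v \<and> lev u < lev v" for u v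
      using that simple_graph_edgeD[OF G] by blast
  qed (rule \<open>countable V\<close>, rule lev(4), assumption, rule that)
  have key_lower: "key u < key v" if "E u v" "lev u < lev v" for u v
    using key(2) simple_graph_edgeD[OF G that(1)] that by blast
  interpret greedy_embedding V E lev k key col c T X
    by (intro greedy_embedding.intro G lev key(1) key_lower assms(5,6) False)
  have "inj_on (greedy \<circ> key) V \<and> (greedy \<circ> key) ` V \<subseteq> {1..}
    \<and> (\<forall>u v. E u v \<longrightarrow> col {(greedy \<circ> key) u, (greedy \<circ> key) v} = c)"
    using greedy_inj greedy_positive greedy_monochromatic by auto
  then have "(greedy \<circ> key) ` V \<in> mono_copies col V E"
    unfolding mono_copies_def by blast
  then have "upper_density ((greedy \<circ> key) ` V) \<le> Rd_col col V E"
    unfolding Rd_col_def by (intro Sup_upper) blast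
  with greedy_covers_base show ?thesis
    using upper_density_mono order_trans by blast
qed

lemma sum_powers_Suc:
  fixes q :: "'a :: comm_semiring_1"
  shows "(\<Sum>i=0..Suc n. q ^ i) = 1 + q * (\<Sum>i=0..n. q ^ i)"
  by (subst sum.atLeast0_atMost_Suc_shift) (simp add: sum_distrib_left)

lemma sum_powers_mono:
  fixes q :: "'a :: linordered_semidom"
  assumes "0 \<le> q" "n \<le> n'"
  shows "(\<Sum>i=0..n. q ^ i) \<le> (\<Sum>i=0..n'. q ^ i)"
  using assms by (intro sum_mono2) auto

lemma one_le_sum_powers:
  fixes q :: "'a :: linordered_semidom"
  assumes "0 \<le> q"
  shows "1 \<le> (\<Sum>i=0..n. q ^ i)"
  using sum_powers_mono[OF assms, of 0 n] by simp

lemma sum_powers_le_power: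
  fixes q :: "'a :: linordered_semidom"
  assumes "0 \<le> q"
  shows "(\<Sum>i=0..n. q ^ i) \<le> (q + 1) ^ n"
proof -
  have "(\<Sum>i=0..n. q ^ i) \<le> (\<Sum>i\<le>n. of_nat (n choose i) * q ^ i)"
    unfolding atLeast0AtMost
  proof (rule sum_mono)
    fix i assume "i \<in> {..n}"
    then have "1 \<le> n choose i"
      by (simp add: Suc_leI)
    then show "q ^ i \<le> of_nat (n choose i) * q ^ i"
      using assms by (metis mult_right_mono mult_1 of_nat_1 of_nat_mono zero_le_power)
  qed
  also have "\<dots> = (q + 1) ^ n"
    by (simp add: binomial_ring)
  finally show ?thesis .
qed

lemma towers_extend:
  assumes "\<forall>c\<in>C. tower col c (T c) Z" "free_ultrafilter W" "\<forall>\<^sub>F y in W. y \<in> Z" "d \<in> C"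
  shows "\<forall>c\<in>C. tower col c ((T(d := (W, Z) # T d)) c) (Z \<inter> large_nbhd col W d)"
  using assms by (auto intro: tower_mono[of col _ _ Z])

lemma free_ultrafilter_colour_split:
  assumes col: "r_coloring r col" and "infinite Z" "Z \<subseteq> {1..}"
  obtains W e where "free_ultrafilter W" "\<forall>\<^sub>F y in W. y \<in> Z" "e \<in> {1..r}"
    "\<forall>\<^sub>F y in W. y \<in> Z \<inter> large_nbhd col W e" "Z \<subseteq> (\<Union>d\<in>{1..r}. Z \<inter> large_nbhd col W d)"
proof -
  obtain W where W: "free_ultrafilter W" "\<forall>\<^sub>F y in W. y \<in> Z"
    using \<open>infinite Z\<close> by (rule free_ultrafilter_exists)
  have cover: "Z \<subseteq> (\<Union>d\<in>{1..r}. Z \<inter> large_nbhd col W d)"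
    using large_nbhd_cover[OF col W(1)] \<open>Z \<subseteq> {1..}\<close> by blast
  have "\<forall>\<^sub>F y in W. \<exists>d\<in>{1..r}. y \<in> Z \<inter> large_nbhd col W d"
    using W(2) by eventually_elim (use cover in blast)
  from free_ultrafilter_bex[OF W(1) finite_atLeastAtMost this]
  obtain e where "e \<in> {1..r}" "\<forall>\<^sub>F y in W. y \<in> Z \<inter> large_nbhd col W e"
    by blast
  with W cover show ?thesis
    using that by blast
qed

lemma upper_density_le_split:
  assumes "Z \<subseteq> (\<Union>d\<in>D. A d)" "finite D" "e \<in> D"
    and "upper_density (A e) \<le> ereal a" "\<And>d. d \<in> D \<Longrightarrow> upper_density (A d) \<le> ereal b"
  shows "upper_density Z \<le> ereal (a + real (card D - 1) * b)"
proof -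
  have "upper_density Z \<le> upper_density (A e \<union> (\<Union>d\<in>D - {e}. A d))"
    using assms(1) by (intro upper_density_mono) auto
  also have "\<dots> \<le> upper_density (A e) + upper_density (\<Union>d\<in>D - {e}. A d)"
    by (rule upper_density_Un_le)
  also have "\<dots> \<le> upper_density (A e) + (\<Sum>d\<in>D - {e}. upper_density (A d))"
    using \<open>finite D\<close> by (intro add_left_mono upper_density_UN_le) simp
  also have "\<dots> \<le> ereal a + (\<Sum>d\<in>D - {e}. ereal b)"
    using assms(4,5) by (intro add_mono sum_mono) auto
  also have "\<dots> = ereal (a + real (card D - 1) * b)"
    using assms(2,3) by simp
  finally show ?thesis .
qed

definition tower_deficit :: "nat \<Rightarrow> nat \<Rightarrow> (nat \<Rightarrow> (nat filter \<times> nat set) list) \<Rightarrow> nat" where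
  "tower_deficit m r T = (\<Sum>c\<in>{1..r}. m - length (T c))"

lemma tower_deficit_extend:
  assumes "d \<in> {1..r}" "length (T d) < m"
  shows "tower_deficit m r (T(d := p # T d)) < tower_deficit m r T"
  unfolding tower_deficit_def using assms by (intro sum_strict_mono_ex1) auto

lemma tower_splitting_step:
  fixes \<rho> b :: real
  assumes col: "r_coloring r col" and "1 \<le> r" and "\<rho> \<le> b"
    and long: "\<And>c T X. c \<in> {1..r} \<Longrightarrow> tower col c T X \<Longrightarrow> m < length T \<Longrightarrow> upper_density X \<le> \<rho>"
    and towers: "\<forall>c\<in>{1..r}. tower col c (T c) Z" and "infinite Z"
    and smaller: "\<And>T' Z'. \<forall>c\<in>{1..r}. tower col c (T' c) Z' \<Longrightarrow>
      tower_deficit m r T' < tower_deficit m r T \<Longrightarrow> upper_density Z' \<le> b"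
  shows "upper_density Z \<le> ereal (\<rho> + real (r - 1) * b)"
proof -
  have "Z \<subseteq> {1..}"
    using towers \<open>1 \<le> r\<close> tower_positive by fastforce
  with col \<open>infinite Z\<close> obtain W e where W: "free_ultrafilter W" "\<forall>\<^sub>F y in W. y \<in> Z"
    and e: "e \<in> {1..r}" "\<forall>\<^sub>F y in W. y \<in> Z \<inter> large_nbhd col W e"
    and cover: "Z \<subseteq> (\<Union>d\<in>{1..r}. Z \<inter> large_nbhd col W d)"
    by (rule free_ultrafilter_colour_split)
  \<comment> \<open>the W-large class is the base of a constant tower of any length\<close>
  have "tower col e (replicate (Suc m) (W, Z \<inter> large_nbhd col W e)) (Z \<inter> large_nbhd col W e)"
    using W(1) e(2) by (rule tower_replicate) simp
  then have large_class: "upper_density (Z \<inter> large_nbhd col W e) \<le> \<rho>"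
    by (rule long[OF e(1)]) simp
  have other_class: "upper_density (Z \<inter> large_nbhd col W d) \<le> b" if d: "d \<in> {1..r}" for d
  proof -
    define T' where "T' = T(d := (W, Z) # T d)"
    have towers': "\<forall>c\<in>{1..r}. tower col c (T' c) (Z \<inter> large_nbhd col W d)"
      unfolding T'_def using towers W d by (rule towers_extend)
    show ?thesis
    proof (cases "m < length (T' d)")
      case True
      then have "upper_density (Z \<inter> large_nbhd col W d) \<le> \<rho>"
        using long d towers' by blast
      with \<open>\<rho> \<le> b\<close> show ?thesis
        by (simp add: order_trans)
    next
      case False
      then have "tower_deficit m r T' < tower_deficit m r T"
        unfolding T'_def using d by (intro tower_deficit_extend) simp_all
      with towers' show ?thesis
        by (rule smaller)
    qed
  qed
  have "upper_density Z \<le> ereal (\<rho> + real (card {1..r} - 1) * b)"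
    using cover finite_atLeastAtMost e(1) large_class other_class by (rule upper_density_le_split)
  then show ?thesis
    by simp
qed

lemma tower_splitting_bound:
  fixes \<rho> :: real
  assumes col: "r_coloring r col" and "1 \<le> r" and "0 \<le> \<rho>"
    and long: "\<And>c T X. c \<in> {1..r} \<Longrightarrow> tower col c T X \<Longrightarrow> m < length T \<Longrightarrow> upper_density X \<le> \<rho>"
    and "\<forall>c\<in>{1..r}. tower col c (T c) Z"
  shows "upper_density Z \<le> ereal ((\<Sum>i=0..Suc (tower_deficit m r T). (real r - 1) ^ i) * \<rho>)"
  using assms(5)
proof (induction "tower_deficit m r T" arbitrary: Z T rule: less_induct)
  case less
  define S where "S n = (\<Sum>i=0..n. (real r - 1) ^ i)" for n
  have S_mono: "S n * \<rho> \<le> S n' * \<rho>" if "n \<le> n'" for n n'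
    unfolding S_def using \<open>1 \<le> r\<close> \<open>0 \<le> \<rho>\<close> that by (intro mult_right_mono sum_powers_mono) simp_all
  show ?case
  proof (cases "finite Z")
    case True
    then have "upper_density Z \<le> 0"
      by (rule upper_density_finite)
    also have "0 \<le> ereal (S 0 * \<rho>)"
      using \<open>0 \<le> \<rho>\<close> by (simp add: S_def)
    also have "\<dots> \<le> ereal (S (Suc (tower_deficit m r T)) * \<rho>)"
      using S_mono[of 0] by simp
    finally show ?thesis
      by (simp add: S_def)
  next
    case False
    let ?d = "tower_deficit m r T"
    have S_Suc: "S (Suc ?d) = 1 + (real r - 1) * S ?d"
      unfolding S_def by (rule sum_powers_Suc)
    have "upper_density Z \<le> ereal (\<rho> + real (r - 1) * (S ?d * \<rho>))"
    proof (rule tower_splitting_step[OF col \<open>1 \<le> r\<close> _ long less.prems False])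
      show "\<rho> \<le> S ?d * \<rho>"
        using S_mono[of 0 ?d] by (simp add: S_def)
      show "upper_density Z' \<le> S ?d * \<rho>"
        if "\<forall>c\<in>{1..r}. tower col c (T' c) Z'" "tower_deficit m r T' < ?d" for T' Z'
      proof -
        have "upper_density Z' \<le> S (Suc (tower_deficit m r T')) * \<rho>"
          using less.hyps[OF that(2) that(1)] by (simp add: S_def)
        also have "\<dots> \<le> S ?d * \<rho>"
          using that(2) by (simp add: S_mono)
        finally show ?thesis
          by simp
      qed
    qed
    also have "\<rho> + real (r - 1) * (S ?d * \<rho>) = S (Suc ?d) * \<rho>"
      unfolding S_Suc using \<open>1 \<le> r\<close> by (simp add: of_nat_diff algebra_simps)
    finally show ?thesis
      by (simp add: S_def)
  qed
qed

lemma Rd_col_le_1: "Rd_col col V E \<le> 1"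
  unfolding Rd_col_def by (rule Sup_least) (auto intro: upper_density_le_1)

lemma Rd_col_lower_bound:
  assumes G: "simple_graph V E" "countable V" "infinite V" and owlf: "one_way_locally_finite k V E"
    and col: "r_coloring r col" and "1 \<le> r"
  shows "ereal (1 / (\<Sum>i=0..(k - 2) * r + 1. (real r - 1) ^ i)) \<le> Rd_col col V E"
proof -
  define S where "S = (\<Sum>i=0..(k - 2) * r + 1. (real r - 1) ^ i)"
  have "2 \<le> k"
    using owlf by (simp add: one_way_locally_finite_def)
  obtain \<rho> where \<rho>: "Rd_col col V E = ereal \<rho>" "0 \<le> \<rho>"
    using Rd_col_nonneg[of col V E] Rd_col_le_1[of col V E] by (cases "Rd_col col V E") auto
  have "upper_density {1..}
    \<le> ereal ((\<Sum>i=0..Suc (tower_deficit (k - 2) r (\<lambda>_. [])). (real r - 1) ^ i) * \<rho>)"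
  proof (rule tower_splitting_bound[OF col \<open>1 \<le> r\<close> \<rho>(2)])
    show "upper_density X \<le> \<rho>" if "c \<in> {1..r}" "tower col c T X" "k - 2 < length T" for c T X
      using upper_density_tower_base_le_Rd_col[OF G owlf that(2)] that(3) \<rho>(1) by simp
  qed simp
  moreover have "tower_deficit (k - 2) r (\<lambda>_. []) = (k - 2) * r"
    by (simp add: tower_deficit_def)
  ultimately have "upper_density {1..} \<le> ereal (S * \<rho>)"
    by (simp add: S_def)
  with upper_density_positive_integers have "1 \<le> S * \<rho>"
    by (metis ereal_less_eq(3) order_trans one_ereal_def)
  moreover have "1 \<le> S"
    unfolding S_def using \<open>1 \<le> r\<close> by (intro one_le_sum_powers) simp
  ultimately have "1 / S \<le> \<rho>"
    by (simp add: divide_le_eq mult.commute)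
  then show ?thesis
    unfolding S_def \<rho>(1) by simp
qed

lemma Rd_lower_bound:
  assumes "simple_graph V E" "countable V" "infinite V" "one_way_locally_finite k V E" "1 \<le> r"
  shows "ereal (1 / (\<Sum>i=0..(k - 2) * r + 1. (real r - 1) ^ i)) \<le> Rd r V E"
  unfolding Rd_def using Rd_col_lower_bound[OF assms(1-4) _ assms(5)] by (auto intro: Inf_greatest)

theorem mainTheorem1:
  fixes V :: "'a set" and E :: "'a \<Rightarrow> 'a \<Rightarrow> bool" and k r :: nat
  assumes "simple_graph V E" and "countable V" and "infinite V"
    and "one_way_locally_finite k V E"
  shows "(k = 2 \<and> 1 \<le> r \<longrightarrow> ereal (1 / real r) \<le> Rd r V E)
       \<and> (2 \<le> k \<longrightarrow> ereal (1 / (2 * (real k - 1))) \<le> Rd 2 V E)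
       \<and> (3 \<le> r \<and> 3 \<le> k \<longrightarrow>
            ereal (1 / (\<Sum>i=0..(k-2)*r+1. (real r - 1) ^ i)) \<le> Rd r V E
          \<and> 1 / (\<Sum>i=0..(k-2)*r+1. (real r - 1) ^ i) \<ge> 1 / real r ^ ((k-2)*r+1))"
proof (intro conjI impI)
  note bound = Rd_lower_bound[OF assms]
  show "ereal (1 / real r) \<le> Rd r V E" if "k = 2 \<and> 1 \<le> r"
    using bound[of r] that by simp
  show "ereal (1 / (2 * (real k - 1))) \<le> Rd 2 V E" if "2 \<le> k"
    using bound[of 2] that by (simp add: of_nat_diff algebra_simps)
  assume "3 \<le> r \<and> 3 \<le> k"
  then show "ereal (1 / (\<Sum>i=0..(k-2)*r+1. (real r - 1) ^ i)) \<le> Rd r V E"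
    using bound[of r] by simp
  from \<open>3 \<le> r \<and> 3 \<le> k\<close> have q: "0 \<le> real r - 1"
    by simp
  have "1 \<le> (\<Sum>i=0..(k-2)*r+1. (real r - 1) ^ i)"
    by (rule one_le_sum_powers[OF q])
  moreover have "(\<Sum>i=0..(k-2)*r+1. (real r - 1) ^ i) \<le> real r ^ ((k-2)*r+1)"
    using sum_powers_le_power[OF q, of "(k-2)*r+1"] by (simp only: diff_add_cancel)
  ultimately show "1 / (\<Sum>i=0..(k-2)*r+1. (real r - 1) ^ i) \<ge> 1 / real r ^ ((k-2)*r+1)"
    by (intro divide_left_mono) simp_all
qed

end
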